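(* Let $G$ be a two-legged one-particle-irreducible graph with two distinct external vertices $v_1$ and $v_2$, and suppose every vertex of $G$ has even incidence number. Let $T$ be any spanning tree of $G$, and let $\theta$ be the linear subtree of $T$ consisting of the unique path from $v_1$ to $v_2$ along lines of $T$. Then for every line $\ell\in\theta$ there are two distinct lines $\ell_1,\ell_2$ of $G$, not in $T$, such that $\ell$ lies on the loop generated by $\ell_1$ and on the loop generated by $\ell_2$ (so these two loops overlap on $\ell$), and for each $i\in\{1,2\}$ the graph $T_i$ obtained from $T$ by removing $\ell$ and adding $\ell_i$ is a spanning tree of $G$.
   Context: A graph here consists of vertices, internal lines (edges joining two vertices; multiple lines between the same pair of vertices and lines from a vertex to itself are allowed) and external legs (half-lines attached to a single vertex). It is two-legged if it has exactly two external legs; the vertices to which the external legs are attached are called external vertices. The incidence number of a vertex is the number of line ends (internal line ends and external legs) at that vertex. A graph is one-particle-irreducible (1PI) if it is connected and remains connected after cutting any single internal line. A spanning tree is a subgraph consisting of internal lines that is a tree containing all vertices. For a spanning tree $T$ and an internal line $\ell'\notin T$, the loop generated by $\ell'$ is the unique cycle in $T\cup\{\ell'\}$, i.e. $\ell'$ together with the path in $T$ joining its endpoints. *)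

theory Defs
  imports Main
begin

text \<open>A graph: vertex set V, internal lines L with endpoints given by
  ends :: 'l => 'v * 'v (self-loops and multiple lines allowed),
  external legs E attached to vertices by att :: 'e => 'v.\<close>

definition wf_graph :: "'v set \<Rightarrow> 'l set \<Rightarrow> ('l \<Rightarrow> 'v \<times> 'v) \<Rightarrow> 'e set \<Rightarrow> ('e \<Rightarrow> 'v) \<Rightarrow> bool" where
  "wf_graph V L ends E att \<longleftrightarrow> finite V \<and> finite L \<and> finite E \<and>
     (\<forall>l\<in>L. fst (ends l) \<in> V \<and> snd (ends l) \<in> V) \<and> (\<forall>e\<in>E. att e \<in> V)"

text \<open>Incidence number: internal line ends (a self-loop counts twice) plus external legs.\<close>
definition incidence :: "'l set \<Rightarrow> ('l \<Rightarrow> 'v \<times> 'v) \<Rightarrow> 'e set \<Rightarrow> ('e \<Rightarrow> 'v) \<Rightarrow> 'v \<Rightarrow> nat" where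
  "incidence L ends E att v =
     card {l\<in>L. fst (ends l) = v} + card {l\<in>L. snd (ends l) = v} + card {e\<in>E. att e = v}"

inductive tpath :: "'l set \<Rightarrow> ('l \<Rightarrow> 'v \<times> 'v) \<Rightarrow> 'v \<Rightarrow> 'l list \<Rightarrow> 'v \<Rightarrow> 'v set \<Rightarrow> bool"
  for S ends where
  nil: "tpath S ends u [] u {u}"
| cons: "\<lbrakk>l \<in> S; ends l = (u, x) \<or> ends l = (x, u); tpath S ends x ls w Vs; u \<notin> Vs\<rbrakk>
         \<Longrightarrow> tpath S ends u (l # ls) w (insert u Vs)"

definition connected_via :: "'v set \<Rightarrow> 'l set \<Rightarrow> ('l \<Rightarrow> 'v \<times> 'v) \<Rightarrow> bool" where
  "connected_via V S ends \<longleftrightarrow> (\<forall>u\<in>V. \<forall>w\<in>V. \<exists>ls Vs. tpath S ends u ls w Vs)"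

definition is_1PI :: "'v set \<Rightarrow> 'l set \<Rightarrow> ('l \<Rightarrow> 'v \<times> 'v) \<Rightarrow> bool" where
  "is_1PI V L ends \<longleftrightarrow> connected_via V L ends \<and> (\<forall>l\<in>L. connected_via V (L - {l}) ends)"

text \<open>A set of lines contains no cycle: no line l whose endpoints are joined
  by a path avoiding l (covers self-loops and multiple lines).\<close>
definition acyclic_lines :: "'l set \<Rightarrow> ('l \<Rightarrow> 'v \<times> 'v) \<Rightarrow> bool" where
  "acyclic_lines S ends \<longleftrightarrow>
     \<not> (\<exists>l\<in>S. \<exists>ls Vs. tpath (S - {l}) ends (snd (ends l)) ls (fst (ends l)) Vs)"

definition spanning_tree :: "'v set \<Rightarrow> 'l set \<Rightarrow> ('l \<Rightarrow> 'v \<times> 'v) \<Rightarrow> 'l set \<Rightarrow> bool" where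
  "spanning_tree V L ends T \<longleftrightarrow> T \<subseteq> L \<and> connected_via V T ends \<and> acyclic_lines T ends"

text \<open>Lines of the path in T joining u and w (unique when T is a tree).\<close>
definition tree_path_lines :: "'l set \<Rightarrow> ('l \<Rightarrow> 'v \<times> 'v) \<Rightarrow> 'v \<Rightarrow> 'v \<Rightarrow> 'l set" where
  "tree_path_lines T ends u w = \<Union>{set ls | ls Vs. tpath T ends u ls w Vs}"

definition loop_gen :: "'l set \<Rightarrow> ('l \<Rightarrow> 'v \<times> 'v) \<Rightarrow> 'l \<Rightarrow> 'l set" where
  "loop_gen T ends l' = insert l' (tree_path_lines T ends (fst (ends l')) (snd (ends l')))"

end

theory Submission
  imports Defs
begin

text \<open>Deleting a line l of the tree T from the path between v1 and v2 splits T into two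
  components, with v1 on one side A and v2 on the other. Summing the (even) incidence numbers
  over A counts every line inside A twice, every line of the cut between A and its complement
  once, and exactly one external leg; so the cut has odd size. Since G is 1PI the cut is not
  {l} alone, hence it contains at least two further lines. None of them lies in T, each
  reconnects the two components of T - {l} to a spanning tree, and the tree path between its
  endpoints must cross from A to the complement, i.e. pass through l.\<close>

lemma card_fibers_sum:
  assumes "finite S" and "finite A"
  shows "(\<Sum>v\<in>A. card {x\<in>S. f x = v}) = card {x\<in>S. f x \<in> A}"
proof -
  have "card (\<Union>v\<in>A. {x\<in>S. f x = v}) = (\<Sum>v\<in>A. card {x\<in>S. f x = v})"
    using assms by (intro card_UN_disjoint) auto
  moreover have "{x\<in>S. f x \<in> A} = (\<Union>v\<in>A. {x\<in>S. f x = v})" by auto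
  ultimately show ?thesis by simp
qed

lemma card_filter_add_card_filter:
  assumes "finite S"
  shows "card {x\<in>S. P x} + card {x\<in>S. Q x} = 2 * card {x\<in>S. P x \<and> Q x} + card {x\<in>S. P x \<noteq> Q x}"
proof -
  have card_as_sum: "card {x\<in>S. R x} = (\<Sum>x\<in>S. if R x then 1 else 0)" for R
    using assms by (simp add: sum.inter_filter[symmetric])
  have "(if P x then 1 else 0) + (if Q x then 1 else 0)
      = 2 * (if P x \<and> Q x then 1 else 0) + (if P x \<noteq> Q x then 1 else (0::nat))" for x
    by auto
  then show ?thesis
    unfolding card_as_sum sum.distrib[symmetric] sum_distrib_left by simp
qed

lemma two_elements_besides_if_odd_card:
  assumes "odd (card X)" and "2 \<le> card X"
  obtains a b where "a \<in> X - {x}" "b \<in> X - {x}" "a \<noteq> b"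
proof -
  have "finite X" "3 \<le> card X"
    using assms by (auto intro: card_ge_0_finite simp: numeral_eq_Suc) presburger
  then have "2 \<le> card (X - {x})"
    by (auto simp: card_Diff_singleton_if)
  then obtain a B where "X - {x} = insert a B" "a \<notin> B" "1 \<le> card B"
    by (metis Suc_1 card_le_Suc_iff)
  then obtain b where "b \<in> B" by fastforce
  with \<open>X - {x} = insert a B\<close> \<open>a \<notin> B\<close> show ?thesis
    by (intro that[of a b]) auto
qed

definition adjacent :: "'l set \<Rightarrow> ('l \<Rightarrow> 'v \<times> 'v) \<Rightarrow> 'v \<Rightarrow> 'v \<Rightarrow> bool" where
  "adjacent S ends u w \<longleftrightarrow> (\<exists>l\<in>S. ends l = (u, w) \<or> ends l = (w, u))"

abbreviation reachable :: "'l set \<Rightarrow> ('l \<Rightarrow> 'v \<times> 'v) \<Rightarrow> 'v \<Rightarrow> 'v \<Rightarrow> bool" where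
  "reachable S ends \<equiv> (adjacent S ends)\<^sup>*\<^sup>*"

definition cut_lines :: "'l set \<Rightarrow> ('l \<Rightarrow> 'v \<times> 'v) \<Rightarrow> 'v set \<Rightarrow> 'l set" where
  "cut_lines S ends A = {l\<in>S. (fst (ends l) \<in> A) \<noteq> (snd (ends l) \<in> A)}"

lemma reachable_line:
  "l \<in> S \<Longrightarrow> ends l = (u, w) \<or> ends l = (w, u) \<Longrightarrow> reachable S ends u w"
  unfolding adjacent_def by (intro r_into_rtranclp) blast

lemma reachable_sym: "reachable S ends u w \<Longrightarrow> reachable S ends w u"
  by (induction rule: rtranclp_induct)
    (auto simp: adjacent_def intro: converse_rtranclp_into_rtranclp)

lemma reachable_mono:
  assumes "reachable S ends u w" and "S \<subseteq> S'"
  shows "reachable S' ends u w"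
proof -
  have "adjacent S ends \<le> adjacent S' ends"
    using assms(2) unfolding adjacent_def by blast
  with assms(1) show ?thesis
    by (metis rtranclp_mono predicate2D)
qed

lemma reachable_insert:
  assumes "reachable (insert e S) ends u w" and "ends e = (p, q)"
  shows "reachable S ends u w \<or> reachable S ends u p \<and> reachable S ends q w
    \<or> reachable S ends u q \<and> reachable S ends p w"
  using assms(1)
proof (induction rule: rtranclp_induct)
  case base
  then show ?case by simp
next
  case (step v w)
  then obtain l where l: "l \<in> insert e S" "ends l = (v, w) \<or> ends l = (w, v)"
    unfolding adjacent_def by blast
  show ?case
  proof (cases "l = e")
    case True
    with l assms(2) have "v = p \<and> w = q \<or> v = q \<and> w = p" by auto
    with step.IH show ?thesis by auto
  next
    case False
    with l have "reachable S ends v w" by (intro reachable_line[of l]) auto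
    with step.IH show ?thesis by (meson rtranclp_trans)
  qed
qed

lemma cut_lines_reachable_component: "cut_lines S ends {v. reachable S ends x v} = {}"
proof -
  have "reachable S ends (fst (ends l)) (snd (ends l))" "reachable S ends (snd (ends l)) (fst (ends l))"
    if "l \<in> S" for l
    using that by (auto intro: reachable_line)
  then show ?thesis
    unfolding cut_lines_def by (auto intro: rtranclp_trans)
qed

lemma cut_lines_nonempty_if_reachable:
  "reachable S ends u w \<Longrightarrow> u \<in> A \<Longrightarrow> w \<notin> A \<Longrightarrow> cut_lines S ends A \<noteq> {}"
proof (induction rule: rtranclp_induct)
  case (step v w)
  then show ?case
    by (cases "v \<in> A") (auto simp: adjacent_def cut_lines_def)
qed simp

lemma tpath_lines: "tpath S ends u ls w Vs \<Longrightarrow> set ls \<subseteq> S"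
  by (induction rule: tpath.induct) auto

lemma tpath_mono: "tpath S ends u ls w Vs \<Longrightarrow> set ls \<subseteq> S' \<Longrightarrow> tpath S' ends u ls w Vs"
  by (induction rule: tpath.induct) (auto intro: tpath.intros)

lemma tpath_start: "tpath S ends u ls w Vs \<Longrightarrow> u \<in> Vs"
  by (induction rule: tpath.induct) auto

lemma tpath_line_ends:
  "tpath S ends u ls w Vs \<Longrightarrow> l \<in> set ls \<Longrightarrow> fst (ends l) \<in> Vs \<and> snd (ends l) \<in> Vs"
  by (induction rule: tpath.induct) (auto dest: tpath_start)

lemma tpath_reachable: "tpath S ends u ls w Vs \<Longrightarrow> reachable S ends u w"
  by (induction rule: tpath.induct) (auto intro: rtranclp_trans reachable_line)

lemma tpath_from_visited:
  "tpath S ends v ls w Vs \<Longrightarrow> u \<in> Vs \<Longrightarrow> \<exists>ls' Vs'. tpath S ends u ls' w Vs'"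
  by (induction rule: tpath.induct) (auto intro: tpath.intros)

lemma reachable_imp_tpath: "reachable S ends u w \<Longrightarrow> \<exists>ls Vs. tpath S ends u ls w Vs"
proof (induction rule: converse_rtranclp_induct)
  case base
  then show ?case by (auto intro: tpath.nil)
next
  case (step u v)
  then obtain ls Vs where path: "tpath S ends v ls w Vs" by blast
  from step.hyps(1) obtain l where l: "l \<in> S" "ends l = (u, v) \<or> ends l = (v, u)"
    unfolding adjacent_def by blast
  show ?case
  proof (cases "u \<in> Vs")
    case True
    then show ?thesis using tpath_from_visited[OF path] by blast
  next
    case False
    then show ?thesis using tpath.cons[OF l path] by blast
  qed
qed

lemma reachable_iff_tpath: "reachable S ends u w \<longleftrightarrow> (\<exists>ls Vs. tpath S ends u ls w Vs)"
  using reachable_imp_tpath tpath_reachable by metis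

lemma connected_via_iff: "connected_via V S ends \<longleftrightarrow> (\<forall>u\<in>V. \<forall>w\<in>V. reachable S ends u w)"
  unfolding connected_via_def reachable_iff_tpath by blast

lemma acyclic_lines_iff:
  "acyclic_lines S ends \<longleftrightarrow> (\<forall>l\<in>S. \<not> reachable (S - {l}) ends (snd (ends l)) (fst (ends l)))"
  unfolding acyclic_lines_def reachable_iff_tpath by blast

lemma tpath_line_split:
  assumes "tpath S ends u ls w Vs" and "l \<in> set ls"
  shows "\<exists>x y. l \<in> S \<and> (ends l = (x, y) \<or> ends l = (y, x))
    \<and> reachable (S - {l}) ends u x \<and> reachable (S - {l}) ends y w"
  using assms
proof (induction rule: tpath.induct)
  case nil
  then show ?case by simp
next
  case (cons l0 u x ls w Vs)
  show ?case
  proof (cases "l0 = l")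
    case True
    then have "u \<in> {fst (ends l), snd (ends l)}"
      using cons.hyps(2) by auto
    \<comment> \<open>the rest of the path avoids u, an endpoint of l\<close>
    then have "l \<notin> set ls"
      using tpath_line_ends[OF cons.hyps(3)] cons.hyps(4) by blast
    then have "tpath (S - {l}) ends x ls w Vs"
      using tpath_lines[OF cons.hyps(3)] by (blast intro: tpath_mono[OF cons.hyps(3)])
    then have "reachable (S - {l}) ends x w"
      by (rule tpath_reachable)
    with True cons.hyps(1,2) show ?thesis by blast
  next
    case False
    with cons.prems have "l \<in> set ls" by simp
    then obtain x' y' where split: "l \<in> S" "ends l = (x', y') \<or> ends l = (y', x')"
      "reachable (S - {l}) ends x x'" "reachable (S - {l}) ends y' w"
      using cons.IH by blast
    have "reachable (S - {l}) ends u x"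
      using False cons.hyps(1,2) by (intro reachable_line) auto
    with split show ?thesis by (meson rtranclp_trans)
  qed
qed

lemma acyclic_lines_subset: "acyclic_lines S ends \<Longrightarrow> S' \<subseteq> S \<Longrightarrow> acyclic_lines S' ends"
  unfolding acyclic_lines_iff by (meson Diff_mono order_refl reachable_mono subsetD)

lemma acyclic_lines_insert:
  assumes acyclic: "acyclic_lines S ends"
    and separated: "\<not> reachable S ends (fst (ends e)) (snd (ends e))"
  shows "acyclic_lines (insert e S) ends"
  unfolding acyclic_lines_iff
proof
  fix l
  assume l: "l \<in> insert e S"
  obtain p q where e: "ends e = (p, q)" by (cases "ends e")
  show "\<not> reachable (insert e S - {l}) ends (snd (ends l)) (fst (ends l))"
  proof (cases "l = e")
    case True
    then have "insert e S - {l} \<subseteq> S" by auto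
    with separated True show ?thesis by (metis reachable_mono reachable_sym)
  next
    case False
    with l have "l \<in> S" by simp
    let ?s = "fst (ends l)" and ?t = "snd (ends l)"
    have not_around: "\<not> reachable (S - {l}) ends ?t ?s"
      using acyclic \<open>l \<in> S\<close> unfolding acyclic_lines_iff by blast
    have along: "reachable S ends ?s ?t" "reachable S ends ?t ?s"
      using \<open>l \<in> S\<close> by (auto intro: reachable_line)
    have in_S: "reachable S ends u w" if "reachable (S - {l}) ends u w" for u w
      using that by (rule reachable_mono) auto
    show ?thesis
    proof
      assume "reachable (insert e S - {l}) ends ?t ?s"
      with False have "reachable (insert e (S - {l})) ends ?t ?s"
        by (simp add: insert_Diff_if)
      from reachable_insert[OF this e] not_around have "reachable S ends p q"
        using along in_S reachable_sym by (meson rtranclp_trans)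
      with separated e show False by simp
    qed
  qed
qed

lemma spanning_tree_insert_joining_line:
  assumes "R \<subseteq> L" and "acyclic_lines R ends"
    and cover: "\<forall>v\<in>V. reachable R ends x v \<or> reachable R ends y v"
    and separated: "\<not> reachable R ends x y"
    and "l' \<in> L" and l': "ends l' = (a, b) \<or> ends l' = (b, a)"
    and a: "reachable R ends x a" and b: "reachable R ends y b"
  shows "spanning_tree V L ends (insert l' R)"
proof -
  have "\<not> reachable R ends a b"
    using separated a b by (meson reachable_sym rtranclp_trans)
  with l' have "\<not> reachable R ends (fst (ends l')) (snd (ends l'))"
    using reachable_sym by fastforce
  with assms(2) have acyclic: "acyclic_lines (insert l' R) ends"
    by (rule acyclic_lines_insert)
  have in_R': "reachable (insert l' R) ends u w" if "reachable R ends u w" for u w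
    using that by (rule reachable_mono) auto
  have "reachable (insert l' R) ends a b"
    using l' by (intro reachable_line) auto
  then have "reachable (insert l' R) ends x y"
    using in_R' a b reachable_sym by (meson rtranclp_trans)
  then have "reachable (insert l' R) ends x v" if "v \<in> V" for v
    using cover that in_R' by (meson rtranclp_trans)
  then have "connected_via V (insert l' R) ends"
    unfolding connected_via_iff by (meson reachable_sym rtranclp_trans)
  with assms(1,5) acyclic show ?thesis
    unfolding spanning_tree_def by blast
qed

lemma spanning_tree_remove_line:
  assumes T: "spanning_tree V L ends T" and "l \<in> T" and l: "ends l = (x, y) \<or> ends l = (y, x)"
  shows "\<not> reachable (T - {l}) ends x y"
    and "x \<in> V \<Longrightarrow> v \<in> V \<Longrightarrow> reachable (T - {l}) ends x v \<or> reachable (T - {l}) ends y v"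
proof -
  show "\<not> reachable (T - {l}) ends x y"
    using T \<open>l \<in> T\<close> l reachable_sym unfolding spanning_tree_def acyclic_lines_iff by fastforce
next
  assume "x \<in> V" "v \<in> V"
  with T have "reachable (insert l (T - {l})) ends x v"
    using \<open>l \<in> T\<close> unfolding spanning_tree_def connected_via_iff by (simp add: insert_absorb)
  with l show "reachable (T - {l}) ends x v \<or> reachable (T - {l}) ends y v"
    using reachable_insert[of l "T - {l}" ends x v] by auto
qed

lemma in_tree_path_lines_if_separates:
  assumes "reachable T ends a b" and "\<not> reachable (T - {l}) ends a b"
  shows "l \<in> tree_path_lines T ends a b"
proof -
  obtain ls Vs where path: "tpath T ends a ls b Vs"
    using reachable_imp_tpath[OF assms(1)] by blast
  have "l \<in> set ls"
  proof (rule ccontr)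
    assume "l \<notin> set ls"
    then have "tpath (T - {l}) ends a ls b Vs"
      using tpath_lines[OF path] by (blast intro: tpath_mono[OF path])
    with assms(2) show False
      by (blast dest: tpath_reachable)
  qed
  with path show ?thesis
    unfolding tree_path_lines_def by blast
qed

lemma spanning_tree_exchange:
  assumes T: "spanning_tree V L ends T"
    and line_ends: "\<forall>l\<in>L. fst (ends l) \<in> V \<and> snd (ends l) \<in> V"
    and "l \<in> T" and l: "ends l = (x, y) \<or> ends l = (y, x)"
    and l': "l' \<in> cut_lines L ends {v. reachable (T - {l}) ends x v}" "l' \<noteq> l"
  shows "l' \<in> L - T" and "l \<in> loop_gen T ends l'"
    and "spanning_tree V L ends (insert l' (T - {l}))"
proof -
  define R where "R = T - {l}"
  from T have "T \<subseteq> L" "acyclic_lines T ends" and T_connected: "connected_via V T ends"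
    unfolding spanning_tree_def by auto
  with line_ends \<open>l \<in> T\<close> l have "x \<in> V" by (metis fst_conv snd_conv subsetD)
  have separated: "\<not> reachable R ends x y"
    and cover: "\<forall>v\<in>V. reachable R ends x v \<or> reachable R ends y v"
    using spanning_tree_remove_line[OF T \<open>l \<in> T\<close> l] \<open>x \<in> V\<close> unfolding R_def by auto
  have "l' \<notin> R"
    using l' cut_lines_reachable_component[of R ends x] unfolding R_def cut_lines_def by blast
  with l' show "l' \<in> L - T"
    unfolding R_def cut_lines_def by auto
  obtain a b where ab: "ends l' = (a, b) \<or> ends l' = (b, a)"
    and a: "reachable R ends x a" and not_b: "\<not> reachable R ends x b"
    using l' unfolding R_def cut_lines_def by (cases "ends l'") auto
  have "a \<in> V" "b \<in> V"
    using l' ab line_ends unfolding cut_lines_def by auto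
  with cover not_b have b: "reachable R ends y b" by blast
  show "spanning_tree V L ends (insert l' (T - {l}))"
    using spanning_tree_insert_joining_line[OF _ _ cover separated _ ab a b]
      acyclic_lines_subset[OF \<open>acyclic_lines T ends\<close>] \<open>T \<subseteq> L\<close> l'
    unfolding R_def cut_lines_def by auto
  have "\<not> reachable R ends a b" "\<not> reachable R ends b a"
    using a not_b reachable_sym by (meson rtranclp_trans)+
  moreover have "reachable T ends a b" "reachable T ends b a"
    using T_connected \<open>a \<in> V\<close> \<open>b \<in> V\<close> unfolding connected_via_iff by auto
  ultimately have "l \<in> tree_path_lines T ends (fst (ends l')) (snd (ends l'))"
    using ab in_tree_path_lines_if_separates unfolding R_def by fastforce
  then show "l \<in> loop_gen T ends l'"
    unfolding loop_gen_def by blast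
qed

lemma even_card_cut_lines_add_legs:
  assumes graph: "wf_graph V L ends E att"
    and even_incidence: "\<forall>v\<in>V. even (incidence L ends E att v)"
  shows "even (card (cut_lines L ends A) + card {e\<in>E. att e \<in> A})"
proof -
  from graph have finite: "finite V" "finite L" "finite E"
    and in_V: "\<forall>l\<in>L. fst (ends l) \<in> V \<and> snd (ends l) \<in> V" "\<forall>e\<in>E. att e \<in> V"
    unfolding wf_graph_def by auto
  have "(\<Sum>v\<in>A \<inter> V. incidence L ends E att v) = card {l\<in>L. fst (ends l) \<in> A \<inter> V}
      + card {l\<in>L. snd (ends l) \<in> A \<inter> V} + card {e\<in>E. att e \<in> A \<inter> V}"
    unfolding incidence_def sum.distrib using finite by (simp add: card_fibers_sum)
  also have "\<dots> = card {l\<in>L. fst (ends l) \<in> A} + card {l\<in>L. snd (ends l) \<in> A}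
      + card {e\<in>E. att e \<in> A}"
    using in_V by (intro arg_cong2[where f = "(+)"] arg_cong[where f = card]) auto
  also have "\<dots> = 2 * card {l\<in>L. fst (ends l) \<in> A \<and> snd (ends l) \<in> A}
      + card (cut_lines L ends A) + card {e\<in>E. att e \<in> A}"
    unfolding cut_lines_def using finite by (simp add: card_filter_add_card_filter)
  finally have sum_incidence: "(\<Sum>v\<in>A \<inter> V. incidence L ends E att v)
      = 2 * card {l\<in>L. fst (ends l) \<in> A \<and> snd (ends l) \<in> A}
        + card (cut_lines L ends A) + card {e\<in>E. att e \<in> A}" .
  have "even (\<Sum>v\<in>A \<inter> V. incidence L ends E att v)"
    using even_incidence by (auto intro: dvd_sum)
  then show ?thesis
    unfolding sum_incidence by simp
qed

lemma two_le_card_cut_lines_if_1PI: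
  assumes "is_1PI V L ends" and "finite L"
    and "u \<in> V" "w \<in> V" "u \<in> A" "w \<notin> A"
  shows "2 \<le> card (cut_lines L ends A)"
proof -
  have reachable_without: "reachable (L - {l}) ends u w" if "l \<in> L" for l
    using assms(1,3,4) that unfolding is_1PI_def connected_via_iff by blast
  from assms(1,3,4) have "reachable L ends u w"
    unfolding is_1PI_def connected_via_iff by blast
  from cut_lines_nonempty_if_reachable[OF this assms(5,6)]
  obtain l where l: "l \<in> cut_lines L ends A" by blast
  then have "reachable (L - {l}) ends u w"
    unfolding cut_lines_def by (blast intro: reachable_without)
  from cut_lines_nonempty_if_reachable[OF this assms(5,6)]
  obtain l' where "l' \<in> cut_lines (L - {l}) ends A" by blast
  with l have "{l, l'} \<subseteq> cut_lines L ends A" "card {l, l'} = 2"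
    unfolding cut_lines_def by auto
  moreover have "finite (cut_lines L ends A)"
    using assms(2) unfolding cut_lines_def by simp
  ultimately show ?thesis
    by (metis card_mono)
qed

lemma card_legs_at_one_end:
  assumes "card E = 2" and "att ` E = {v1, v2}" and "v1 \<noteq> v2" and "v1 \<in> A" "v2 \<notin> A"
  shows "card {e\<in>E. att e \<in> A} = 1"
proof -
  have "inj_on att E"
    using assms(1-3) by (intro eq_card_imp_inj_on) (auto intro: card_ge_0_finite)
  then have "card {e\<in>E. att e \<in> A} = card (att ` {e\<in>E. att e \<in> A})"
    by (simp add: card_image inj_on_subset)
  also have "att ` {e\<in>E. att e \<in> A} = att ` E \<inter> A"
    by auto
  also have "\<dots> = {v1}"
    using assms(2,4,5) by auto
  finally show ?thesis by simp
qed

theorem lemma7: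
  fixes V :: "'v set" and L :: "'l set" and ends :: "'l \<Rightarrow> 'v \<times> 'v"
    and E :: "'e set" and att :: "'e \<Rightarrow> 'v" and v1 v2 :: 'v and T :: "'l set"
  assumes "wf_graph V L ends E att"
    and "card E = 2" and "att ` E = {v1, v2}" and "v1 \<noteq> v2"
    and "is_1PI V L ends"
    and "\<forall>v\<in>V. even (incidence L ends E att v)"
    and "spanning_tree V L ends T"
  shows "\<forall>l\<in>tree_path_lines T ends v1 v2.
           \<exists>l1 l2. l1 \<noteq> l2 \<and> l1 \<in> L - T \<and> l2 \<in> L - T \<and>
             l \<in> loop_gen T ends l1 \<and> l \<in> loop_gen T ends l2 \<and>
             spanning_tree V L ends (insert l1 (T - {l})) \<and>
             spanning_tree V L ends (insert l2 (T - {l}))"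
proof
  fix l
  assume "l \<in> tree_path_lines T ends v1 v2"
  then obtain ls Vs where "tpath T ends v1 ls v2 Vs" "l \<in> set ls"
    unfolding tree_path_lines_def by blast
  from tpath_line_split[OF this] obtain x y where "l \<in> T" and l: "ends l = (x, y) \<or> ends l = (y, x)"
    and v1_x: "reachable (T - {l}) ends v1 x" and y_v2: "reachable (T - {l}) ends y v2"
    by blast
  define A where "A = {v. reachable (T - {l}) ends x v}"
  from assms(1) have "finite L" and line_ends: "\<forall>l\<in>L. fst (ends l) \<in> V \<and> snd (ends l) \<in> V"
    unfolding wf_graph_def by auto
  with assms(7) \<open>l \<in> T\<close> l have "x \<in> V" "y \<in> V"
    unfolding spanning_tree_def by (metis fst_conv snd_conv subsetD)+
  have "\<not> reachable (T - {l}) ends x y"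
    by (rule spanning_tree_remove_line(1)[OF assms(7) \<open>l \<in> T\<close> l])
  then have "x \<in> A" "y \<notin> A" "v1 \<in> A" "v2 \<notin> A"
    unfolding A_def using reachable_sym[OF v1_x] rtranclp_trans[OF _ reachable_sym[OF y_v2]] by auto
  then have "odd (card (cut_lines L ends A))"
    using even_card_cut_lines_add_legs[OF assms(1,6), of A] card_legs_at_one_end[OF assms(2-4)] by simp
  moreover have "2 \<le> card (cut_lines L ends A)"
    using two_le_card_cut_lines_if_1PI[OF assms(5) \<open>finite L\<close>] \<open>x \<in> V\<close> \<open>y \<in> V\<close> \<open>x \<in> A\<close> \<open>y \<notin> A\<close> .
  ultimately obtain l1 l2 where "l1 \<in> cut_lines L ends A - {l}" "l2 \<in> cut_lines L ends A - {l}" "l1 \<noteq> l2"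
    by (rule two_elements_besides_if_odd_card)
  with spanning_tree_exchange[OF assms(7) line_ends \<open>l \<in> T\<close> l]
  show "\<exists>l1 l2. l1 \<noteq> l2 \<and> l1 \<in> L - T \<and> l2 \<in> L - T \<and>
             l \<in> loop_gen T ends l1 \<and> l \<in> loop_gen T ends l2 \<and>
             spanning_tree V L ends (insert l1 (T - {l})) \<and>
             spanning_tree V L ends (insert l2 (T - {l}))"
    unfolding A_def by blast
qed

end
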